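(* For every $B\in\mathbb{N}$ there exists an MSSP instance with two agents whose price of autonomy is at least $B$.
   Context: An MDP is a triple $M=(S,\textit{Act},P)$ with finite sets $S$, $\textit{Act}$ and $P:S\times\textit{Act}\times S\to[0,1]$ such that for each $s$ the set $\textit{En}(s)$ of enabled actions (those $a$ with $\sum_t P(s,a,t)=1$) is nonempty. An MSSP instance consists of an MDP $M$, a number $k\ge1$ of agents, and for each agent $i$ an initial state $\iota_i$ and target set $T_i\subseteq S$ with $\iota_i\notin T_i\neq\emptyset$. All agents move simultaneously and independently in $M$ under their chosen actions. $\textit{MHit}$ is the first time step at which some agent $i$ is in a state of $T_i$. A coordinated strategy is a (possibly randomized, history-dependent) strategy in the product MDP $(S^k,\textit{Act}^k,P')$, $P'((s_i)_i,(a_i)_i,(t_i)_i)=\prod_iP(s_i,a_i,t_i)$, started at $(\iota_1,\dots,\iota_k)$. An autonomous profile $(\sigma_1,\dots,\sigma_k)$ consists of strategies where $\sigma_i$ depends only on agent $i$'s own history (possibly randomized, with memory). The price of autonomy of an instance is the ratio $\inf_{\pi\text{ autonomous}}\mathbb{E}_\pi[\textit{MHit}]\,/\,\inf_{\sigma\text{ coordinated}}\mathbb{E}_\sigma[\textit{MHit}]$. *)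

theory Defs
  imports "HOL-Probability.Probability"
begin

text \<open>MDPs with states and actions drawn from nat (finite carrier sets).
  The transition function P is only consulted on S x Act x S.\<close>

record mdp =
  mdp_S   :: "nat set"
  mdp_Act :: "nat set"
  mdp_P   :: "nat \<Rightarrow> nat \<Rightarrow> nat \<Rightarrow> real"

definition En :: "mdp \<Rightarrow> nat \<Rightarrow> nat set" where
  "En M s = {a \<in> mdp_Act M. (\<Sum>t\<in>mdp_S M. mdp_P M s a t) = 1}"

definition is_mdp :: "mdp \<Rightarrow> bool" where
  "is_mdp M \<longleftrightarrow> finite (mdp_S M) \<and> finite (mdp_Act M) \<and>
     (\<forall>s\<in>mdp_S M. \<forall>a\<in>mdp_Act M. \<forall>t\<in>mdp_S M. 0 \<le> mdp_P M s a t \<and> mdp_P M s a t \<le> 1) \<and>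
     (\<forall>s\<in>mdp_S M. En M s \<noteq> {})"

definition trans_pmf :: "mdp \<Rightarrow> nat \<Rightarrow> nat \<Rightarrow> nat pmf" where
  "trans_pmf M s a = embed_pmf (\<lambda>t. if t \<in> mdp_S M then mdp_P M s a t else 0)"

definition mssp2 :: "mdp \<Rightarrow> nat \<Rightarrow> nat set \<Rightarrow> nat \<Rightarrow> nat set \<Rightarrow> bool" where
  "mssp2 M i1 T1 i2 T2 \<longleftrightarrow> is_mdp M \<and>
     i1 \<in> mdp_S M \<and> T1 \<subseteq> mdp_S M \<and> i1 \<notin> T1 \<and> T1 \<noteq> {} \<and>
     i2 \<in> mdp_S M \<and> T2 \<subseteq> mdp_S M \<and> i2 \<notin> T2 \<and> T2 \<noteq> {}"

text \<open>Coordinated strategies in the product MDP: a history is the list of past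
  (joint state, joint action) pairs together with the current joint state;
  the strategy returns a distribution over enabled joint actions.\<close>
type_synonym jhist = "((nat \<times> nat) \<times> (nat \<times> nat)) list"
type_synonym cstrat = "jhist \<Rightarrow> nat \<times> nat \<Rightarrow> (nat \<times> nat) pmf"

definition coord_strat :: "mdp \<Rightarrow> cstrat \<Rightarrow> bool" where
  "coord_strat M \<sigma> \<longleftrightarrow> (\<forall>h s1 s2. s1 \<in> mdp_S M \<longrightarrow> s2 \<in> mdp_S M \<longrightarrow>
       set_pmf (\<sigma> h (s1, s2)) \<subseteq> En M s1 \<times> En M s2)"

fun hist :: "mdp \<Rightarrow> nat \<Rightarrow> nat \<Rightarrow> cstrat \<Rightarrow> nat \<Rightarrow> (jhist \<times> (nat \<times> nat)) pmf" where
  "hist M i1 i2 \<sigma> 0 = return_pmf ([], (i1, i2))"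
| "hist M i1 i2 \<sigma> (Suc n) = hist M i1 i2 \<sigma> n \<bind> (\<lambda>(h, s).
      \<sigma> h s \<bind> (\<lambda>a. map_pmf (\<lambda>t. (h @ [(s, a)], t))
         (pair_pmf (trans_pmf M (fst s) (fst a)) (trans_pmf M (snd s) (snd a)))))"

definition not_hit :: "nat set \<Rightarrow> nat set \<Rightarrow> jhist \<times> (nat \<times> nat) \<Rightarrow> bool" where
  "not_hit T1 T2 x \<longleftrightarrow> (\<forall>s \<in> set (map fst (fst x) @ [snd x]). fst s \<notin> T1 \<and> snd s \<notin> T2)"

text \<open>E[MHit] = sum over n of Pr[MHit > n] (possibly infinite).\<close>
definition exp_MHit :: "mdp \<Rightarrow> nat \<Rightarrow> nat set \<Rightarrow> nat \<Rightarrow> nat set \<Rightarrow> cstrat \<Rightarrow> ennreal" where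
  "exp_MHit M i1 T1 i2 T2 \<sigma> =
     (\<Sum>n. ennreal (measure_pmf.prob (hist M i1 i2 \<sigma> n) {x. not_hit T1 T2 x}))"

text \<open>Autonomous strategies: each agent sees only its own (state, action) history
  and its current state.\<close>
type_synonym astrat = "(nat \<times> nat) list \<Rightarrow> nat \<Rightarrow> nat pmf"

definition auto_strat :: "mdp \<Rightarrow> astrat \<Rightarrow> bool" where
  "auto_strat M \<tau> \<longleftrightarrow> (\<forall>h s. s \<in> mdp_S M \<longrightarrow> set_pmf (\<tau> h s) \<subseteq> En M s)"

definition proj1_hist :: "jhist \<Rightarrow> (nat \<times> nat) list" where
  "proj1_hist h = map (\<lambda>(s, a). (fst s, fst a)) h"
definition proj2_hist :: "jhist \<Rightarrow> (nat \<times> nat) list" where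
  "proj2_hist h = map (\<lambda>(s, a). (snd s, snd a)) h"

definition profile :: "astrat \<Rightarrow> astrat \<Rightarrow> cstrat" where
  "profile \<tau>1 \<tau>2 = (\<lambda>h s. pair_pmf (\<tau>1 (proj1_hist h) (fst s)) (\<tau>2 (proj2_hist h) (snd s)))"

definition opt_coord :: "mdp \<Rightarrow> nat \<Rightarrow> nat set \<Rightarrow> nat \<Rightarrow> nat set \<Rightarrow> ennreal" where
  "opt_coord M i1 T1 i2 T2 = (INF \<sigma> \<in> {\<sigma>. coord_strat M \<sigma>}. exp_MHit M i1 T1 i2 T2 \<sigma>)"

definition opt_auto :: "mdp \<Rightarrow> nat \<Rightarrow> nat set \<Rightarrow> nat \<Rightarrow> nat set \<Rightarrow> ennreal" where
  "opt_auto M i1 T1 i2 T2 = (INF p \<in> {(\<tau>1, \<tau>2). auto_strat M \<tau>1 \<and> auto_strat M \<tau>2}.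
       exp_MHit M i1 T1 i2 T2 (profile (fst p) (snd p)))"

definition price_of_autonomy :: "mdp \<Rightarrow> nat \<Rightarrow> nat set \<Rightarrow> nat \<Rightarrow> nat set \<Rightarrow> ennreal" where
  "price_of_autonomy M i1 T1 i2 T2 = opt_auto M i1 T1 i2 T2 / opt_coord M i1 T1 i2 T2"

end

theory Submission
  imports Defs
begin

(* In the trap instance agent 1 starts at a coin that traps it (forever) with probability 1/N and
   otherwise puts it on a road reaching the common goal after N + 1 steps; agent 2 may wait, take
   the road, or gamble: trapped with probability 1/N, at the goal at once otherwise.

   Coordinated, agent 2 waits one step and gambles exactly when agent 1 is on the road. From
   step 2 on nobody has arrived only if somebody is trapped, which has probability at most 2/N,
   and from step N + 2 on somebody always has; hence E[MHit] <= 2 + N * 2/N = 4.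

   Autonomous agents evolve independently, so the probability that nobody has arrived is a product.
   If agent 2 is trapped with positive probability c at some time, both agents stay trapped with
   probability at least c/N, and E[MHit] is infinite. Otherwise agent 2 never gambles, and neither
   agent reaches the goal before step N + 1, so E[MHit] >= N + 1. Now take N = 4B + 2. *)

section \<open>Histories and expected hitting times\<close>

lemma pair_pmf_bind_pmf:
  "pair_pmf (bind_pmf A f) (bind_pmf B g) = bind_pmf (pair_pmf A B) (\<lambda>(x, y). pair_pmf (f x) (g y))"
  unfolding pair_pmf_def
  by (simp add: bind_assoc_pmf bind_return_pmf) (subst bind_commute_pmf[of B], rule refl)

definition agent_step ::
  "mdp \<Rightarrow> astrat \<Rightarrow> (nat \<times> nat) list \<times> nat \<Rightarrow> ((nat \<times> nat) list \<times> nat) pmf" where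
  "agent_step M \<tau> x =
     \<tau> (fst x) (snd x) \<bind> (\<lambda>a. map_pmf (\<lambda>t. (fst x @ [(snd x, a)], t)) (trans_pmf M (snd x) a))"

fun agent_hist :: "mdp \<Rightarrow> nat \<Rightarrow> astrat \<Rightarrow> nat \<Rightarrow> ((nat \<times> nat) list \<times> nat) pmf" where
  "agent_hist M i \<tau> 0 = return_pmf ([], i)"
| "agent_hist M i \<tau> (Suc n) = agent_hist M i \<tau> n \<bind> agent_step M \<tau>"

definition zip_hist :: "(nat \<times> nat) list \<Rightarrow> (nat \<times> nat) list \<Rightarrow> jhist" where
  "zip_hist h1 h2 = map (\<lambda>((s1, a1), (s2, a2)). ((s1, s2), (a1, a2))) (zip h1 h2)"

definition join_hists ::
  "((nat \<times> nat) list \<times> nat) \<times> ((nat \<times> nat) list \<times> nat) \<Rightarrow> jhist \<times> (nat \<times> nat)" where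
  "join_hists x = (zip_hist (fst (fst x)) (fst (snd x)), (snd (fst x), snd (snd x)))"

definition avoids :: "nat set \<Rightarrow> (nat \<times> nat) list \<times> nat \<Rightarrow> bool" where
  "avoids T x \<longleftrightarrow> (\<forall>s \<in> set (map fst (fst x) @ [snd x]). s \<notin> T)"

lemma length_agent_hist: "x \<in> set_pmf (agent_hist M i \<tau> n) \<Longrightarrow> length (fst x) = n"
  by (induction n arbitrary: x) (auto simp: agent_step_def)

lemma agent_hist_SucE:
  assumes "x' \<in> set_pmf (agent_hist M i \<tau> (Suc n))"
  obtains x a t where "x \<in> set_pmf (agent_hist M i \<tau> n)" "a \<in> set_pmf (\<tau> (fst x) (snd x))"
    "t \<in> set_pmf (trans_pmf M (snd x) a)" "x' = (fst x @ [(snd x, a)], t)"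
  using assms by (auto simp: agent_step_def)

lemma agent_hist_SucI:
  assumes "x \<in> set_pmf (agent_hist M i \<tau> n)" "a \<in> set_pmf (\<tau> (fst x) (snd x))"
    "t \<in> set_pmf (trans_pmf M (snd x) a)"
  shows "(fst x @ [(snd x, a)], t) \<in> set_pmf (agent_hist M i \<tau> (Suc n))"
  using assms by (force simp: agent_step_def)

lemma hist_SucE:
  assumes "x' \<in> set_pmf (hist M i1 i2 \<sigma> (Suc n))"
  obtains x a t1 t2 where "x \<in> set_pmf (hist M i1 i2 \<sigma> n)" "a \<in> set_pmf (\<sigma> (fst x) (snd x))"
    "t1 \<in> set_pmf (trans_pmf M (fst (snd x)) (fst a))"
    "t2 \<in> set_pmf (trans_pmf M (snd (snd x)) (snd a))"
    "x' = (fst x @ [(snd x, a)], (t1, t2))"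
  using assms by (auto simp: split_beta)

lemma proj1_hist_zip_hist: "length h1 = length h2 \<Longrightarrow> proj1_hist (zip_hist h1 h2) = h1"
  unfolding proj1_hist_def zip_hist_def by (induction h1 h2 rule: list_induct2) auto

lemma proj2_hist_zip_hist: "length h1 = length h2 \<Longrightarrow> proj2_hist (zip_hist h1 h2) = h2"
  unfolding proj2_hist_def zip_hist_def by (induction h1 h2 rule: list_induct2) auto

lemma zip_hist_snoc:
  "length h1 = length h2 \<Longrightarrow>
   zip_hist (h1 @ [(s1, a1)]) (h2 @ [(s2, a2)]) = zip_hist h1 h2 @ [((s1, s2), (a1, a2))]"
  unfolding zip_hist_def by simp

lemma not_hit_join_hists:
  assumes "length h1 = length h2"
  shows "not_hit T1 T2 (join_hists ((h1, s1), (h2, s2))) \<longleftrightarrow> avoids T1 (h1, s1) \<and> avoids T2 (h2, s2)"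
proof -
  let ?Z = "zip (map fst h1) (map fst h2)"
  have "map fst (zip_hist h1 h2) = ?Z"
    using assms unfolding zip_hist_def by (induction h1 h2 rule: list_induct2) auto
  moreover have "map fst ?Z = map fst h1" "map snd ?Z = map fst h2"
    using assms by simp_all
  then have "set (map fst h1) = fst ` set ?Z" "set (map fst h2) = snd ` set ?Z"
    by (metis set_map)+
  ultimately show ?thesis
    unfolding not_hit_def avoids_def join_hists_def by auto
qed

lemma profile_step:
  assumes "length (fst x1) = length (fst x2)"
  shows "(case join_hists (x1, x2) of (h, s) \<Rightarrow> profile \<tau>1 \<tau>2 h s \<bind> (\<lambda>a.
           map_pmf (\<lambda>t. (h @ [(s, a)], t))
             (pair_pmf (trans_pmf M (fst s) (fst a)) (trans_pmf M (snd s) (snd a)))))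
       = map_pmf join_hists (pair_pmf (agent_step M \<tau>1 x1) (agent_step M \<tau>2 x2))"
  using assms
  by (simp add: join_hists_def profile_def proj1_hist_zip_hist proj2_hist_zip_hist agent_step_def
      pair_pmf_bind_pmf map_bind_pmf split_beta map_pair[symmetric] pmf.map_comp o_def
      zip_hist_snoc)

lemma hist_profile:
  "hist M i1 i2 (profile \<tau>1 \<tau>2) n =
     map_pmf join_hists (pair_pmf (agent_hist M i1 \<tau>1 n) (agent_hist M i2 \<tau>2 n))"
proof (induction n)
  case 0
  then show ?case by (simp add: join_hists_def zip_hist_def)
next
  case (Suc n)
  let ?H = "pair_pmf (agent_hist M i1 \<tau>1 n) (agent_hist M i2 \<tau>2 n)"
  have "hist M i1 i2 (profile \<tau>1 \<tau>2) (Suc n) =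
      ?H \<bind> (\<lambda>(x1, x2). map_pmf join_hists (pair_pmf (agent_step M \<tau>1 x1) (agent_step M \<tau>2 x2)))"
    unfolding hist.simps Suc bind_map_pmf
    by (intro bind_pmf_cong refl) (auto dest!: length_agent_hist simp: profile_step)
  also have "\<dots> =
      map_pmf join_hists (pair_pmf (agent_hist M i1 \<tau>1 (Suc n)) (agent_hist M i2 \<tau>2 (Suc n)))"
    by (simp add: pair_pmf_bind_pmf map_bind_pmf case_prod_unfold)
  finally show ?case .
qed

lemma prob_not_hit_profile:
  "measure (hist M i1 i2 (profile \<tau>1 \<tau>2) n) {x. not_hit T1 T2 x} =
     measure (agent_hist M i1 \<tau>1 n) {x. avoids T1 x} *
     measure (agent_hist M i2 \<tau>2 n) {x. avoids T2 x}"
proof -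
  let ?H = "pair_pmf (agent_hist M i1 \<tau>1 n) (agent_hist M i2 \<tau>2 n)"
  have "measure (hist M i1 i2 (profile \<tau>1 \<tau>2) n) {x. not_hit T1 T2 x} =
      measure ?H (join_hists -` {x. not_hit T1 T2 x})"
    by (simp add: hist_profile)
  also have "\<dots> = measure ?H ({x. avoids T1 x} \<times> {x. avoids T2 x})"
    by (rule measure_pmf.finite_measure_eq_AE)
      (auto simp: AE_measure_pmf_iff not_hit_join_hists dest!: length_agent_hist)
  also have "\<dots> =
      measure (agent_hist M i1 \<tau>1 n) {x. avoids T1 x} *
      measure (agent_hist M i2 \<tau>2 n) {x. avoids T2 x}"
    by (intro measure_pmf_prob_product countableI_type)
  finally show ?thesis .
qed

lemma nn_integral_hist_le:
  assumes "\<And>n x a. x \<in> set_pmf (hist M i1 i2 \<sigma> n) \<Longrightarrow> a \<in> set_pmf (\<sigma> (fst x) (snd x)) \<Longrightarrow>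
      (\<integral>\<^sup>+t. V t \<partial>pair_pmf (trans_pmf M (fst (snd x)) (fst a)) (trans_pmf M (snd (snd x)) (snd a)))
        \<le> V (snd x)"
  shows "(\<integral>\<^sup>+x. V (snd x) \<partial>hist M i1 i2 \<sigma> n) \<le> V (i1, i2)"
proof (induction n)
  case 0
  show ?case by simp
next
  case (Suc n)
  let ?T = "\<lambda>x a. pair_pmf (trans_pmf M (fst (snd x)) (fst a)) (trans_pmf M (snd (snd x)) (snd a))"
  have "(\<integral>\<^sup>+x. V (snd x) \<partial>hist M i1 i2 \<sigma> (Suc n)) =
      (\<integral>\<^sup>+x. \<integral>\<^sup>+a. \<integral>\<^sup>+t. V t \<partial>?T x a \<partial>\<sigma> (fst x) (snd x) \<partial>hist M i1 i2 \<sigma> n)"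
    by (simp add: split_beta)
  also have "\<dots> \<le> (\<integral>\<^sup>+x. V (snd x) \<partial>hist M i1 i2 \<sigma> n)"
  proof (rule nn_integral_mono_AE, unfold AE_measure_pmf_iff, intro ballI)
    fix x assume "x \<in> set_pmf (hist M i1 i2 \<sigma> n)"
    then have "(\<integral>\<^sup>+a. \<integral>\<^sup>+t. V t \<partial>?T x a \<partial>\<sigma> (fst x) (snd x)) \<le> (\<integral>\<^sup>+a. V (snd x) \<partial>\<sigma> (fst x) (snd x))"
      by (intro nn_integral_mono_AE) (simp add: AE_measure_pmf_iff assms)
    then show "(\<integral>\<^sup>+a. \<integral>\<^sup>+t. V t \<partial>?T x a \<partial>\<sigma> (fst x) (snd x)) \<le> V (snd x)"
      by (simp add: measure_pmf.emeasure_space_1)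
  qed
  finally show ?case using Suc.IH by (rule order_trans)
qed

lemma suminf_ennreal_eq_top:
  assumes "0 < c" "\<And>n. m \<le> n \<Longrightarrow> c \<le> f n" "\<And>n. 0 \<le> f n"
  shows "(\<Sum>n. ennreal (f n)) = \<top>"
proof (rule ccontr)
  assume "(\<Sum>n. ennreal (f n)) \<noteq> \<top>"
  then have "f \<longlonglongrightarrow> 0"
    using assms(3) by (intro summable_LIMSEQ_zero summable_suminf_not_top)
  then have "eventually (\<lambda>n. f n < c) sequentially"
    using assms(1) by (rule order_tendstoD(2))
  then obtain n where "f (max n m) < c"
    by (metis eventually_sequentially max.cobounded1)
  with assms(2)[of "max n m"] show False by simp
qed

lemma nn_integral_pair_pmf_add:
  "(\<integral>\<^sup>+t. f (fst t) + g (snd t) \<partial>pair_pmf A B) = (\<integral>\<^sup>+x. f x \<partial>A) + (\<integral>\<^sup>+y. g y \<partial>B)"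
  by (simp add: nn_integral_pair_pmf' nn_integral_add measure_pmf.emeasure_space_1)

lemma of_nat_le_divide_ennreal:
  assumes "y \<le> ennreal c" "ennreal (real B * c) \<le> x" "0 < x"
  shows "of_nat B \<le> x / y"
proof (cases "y = 0")
  case True
  then show ?thesis using assms(3) by (simp add: ennreal_divide_zero)
next
  case False
  with assms(1) obtain r where r: "y = ennreal r" "0 < r" "r \<le> c"
    by (cases y) (auto simp: ennreal_le_iff2 top_unique)
  then have "real B \<le> real B * c / r"
    by (simp add: le_divide_eq mult_left_mono)
  then have "of_nat B \<le> ennreal (real B * c) / y"
    using r by (simp add: divide_ennreal ennreal_of_nat_eq_real_of_nat ennreal_leI)
  also have "\<dots> \<le> x / y"
    using assms(2) by (rule divide_right_mono_ennreal)
  finally show ?thesis .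
qed

section \<open>The trap instance\<close>

text \<open>States: agent 1 starts in 0, agent 2 in 1; 2 is an absorbing trap, 3 the absorbing goal,
  and 4, ..., N + 3 a road leading to the goal in N steps. In 0 a coin sends the agent into the
  trap with probability 1/N and onto the road otherwise. In 1 the agent may wait (action 0),
  take the road (action 1) or gamble (action 2): trap with probability 1/N, goal otherwise.\<close>
definition trap_step :: "nat \<Rightarrow> nat \<Rightarrow> nat \<Rightarrow> nat pmf" where
  "trap_step N s a =
     (if s = 0 then map_pmf (\<lambda>b. if b then 2 else 4) (bernoulli_pmf (1 / real N))
      else if s = 1 then
        (if a = 0 then return_pmf 1 else if a = 1 then return_pmf 4
         else map_pmf (\<lambda>b. if b then 2 else 3) (bernoulli_pmf (1 / real N)))
      else if s = 2 \<or> s = 3 then return_pmf s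
      else if s = N + 3 then return_pmf 3 else return_pmf (Suc s))"

definition trap_enabled :: "nat \<Rightarrow> nat \<Rightarrow> bool" where
  "trap_enabled s a \<longleftrightarrow> a = 0 \<or> (s = 1 \<and> (a = 1 \<or> a = 2))"

definition trap_mdp :: "nat \<Rightarrow> mdp" where
  "trap_mdp N = \<lparr>mdp_S = {0..N+3}, mdp_Act = {0, 1, 2},
     mdp_P = (\<lambda>s a t. if trap_enabled s a then pmf (trap_step N s a) t else 0)\<rparr>"

lemma mdp_S_trap_mdp: "mdp_S (trap_mdp N) = {0..N+3}"
  by (simp add: trap_mdp_def)

context
  fixes N :: nat
  assumes N_ge_2: "2 \<le> N"
begin

lemma set_trap_step_cases:
  assumes "t \<in> set_pmf (trap_step N s a)"
  shows "(s = 0 \<and> (t = 2 \<or> t = 4)) \<or> (s = 1 \<and> a = 0 \<and> t = 1) \<or> (s = 1 \<and> a = 1 \<and> t = 4)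
    \<or> (s = 1 \<and> a \<noteq> 0 \<and> a \<noteq> 1 \<and> (t = 2 \<or> t = 3)) \<or> ((s = 2 \<or> s = 3) \<and> t = s)
    \<or> (4 \<le> s \<and> s = N + 3 \<and> t = 3) \<or> (4 \<le> s \<and> s \<noteq> N + 3 \<and> t = Suc s)"
  using assms N_ge_2 unfolding trap_step_def by (auto split: if_splits)

lemma set_trap_step: "s \<le> N + 3 \<Longrightarrow> set_pmf (trap_step N s a) \<subseteq> {0..N+3}"
  using N_ge_2 by (auto dest: set_trap_step_cases)

lemma En_trap_mdp: "s \<le> N + 3 \<Longrightarrow> En (trap_mdp N) s = {a. a \<le> 2 \<and> trap_enabled s a}"
proof -
  assume "s \<le> N + 3"
  then have "(\<Sum>t\<in>{0..N+3}. pmf (trap_step N s a) t) = 1" for a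
    by (intro sum_pmf_eq_1) (use set_trap_step in auto)
  then have "(\<Sum>t\<in>mdp_S (trap_mdp N). mdp_P (trap_mdp N) s a t) =
      (if trap_enabled s a then 1 else 0)" for a
    by (simp add: trap_mdp_def)
  then show ?thesis unfolding En_def by (auto simp: trap_mdp_def trap_enabled_def)
qed

lemma trans_pmf_trap_mdp:
  assumes "s \<le> N + 3" "trap_enabled s a"
  shows "trans_pmf (trap_mdp N) s a = trap_step N s a"
proof -
  have "(\<lambda>t. if t \<in> mdp_S (trap_mdp N) then mdp_P (trap_mdp N) s a t else 0) =
      pmf (trap_step N s a)"
    using set_trap_step[OF assms(1), of a] assms(2)
    by (auto simp: fun_eq_iff set_pmf_eq trap_mdp_def)
  then show ?thesis
    unfolding trans_pmf_def by (simp add: type_definition.Rep_inverse[OF td_pmf_embed_pmf])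
qed

lemma mssp2_trap_mdp: "mssp2 (trap_mdp N) 0 {3} 1 {3}"
proof -
  have "\<forall>s\<in>{0..N+3}. En (trap_mdp N) s \<noteq> {}"
    using En_trap_mdp by (auto simp: trap_enabled_def)
  then have "is_mdp (trap_mdp N)"
    unfolding is_mdp_def by (auto simp: trap_mdp_def pmf_le_1)
  then show ?thesis by (simp add: mssp2_def trap_mdp_def)
qed

subsection \<open>Lower bound for autonomous profiles\<close>

lemma agent_hist_state_le:
  assumes "auto_strat (trap_mdp N) \<tau>" "i \<le> N + 3" "x \<in> set_pmf (agent_hist (trap_mdp N) i \<tau> n)"
  shows "snd x \<le> N + 3"
  using assms(3)
proof (induction n arbitrary: x)
  case 0
  then show ?case using assms(2) by simp
next
  case (Suc n)
  from Suc.prems obtain y a t where y: "y \<in> set_pmf (agent_hist (trap_mdp N) i \<tau> n)"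
    "a \<in> set_pmf (\<tau> (fst y) (snd y))" "t \<in> set_pmf (trans_pmf (trap_mdp N) (snd y) a)"
    "x = (fst y @ [(snd y, a)], t)"
    by (rule agent_hist_SucE)
  have "snd y \<le> N + 3" using Suc.IH y(1) .
  moreover from this have "a \<in> En (trap_mdp N) (snd y)"
    using assms(1) y(2) unfolding auto_strat_def mdp_S_trap_mdp by auto
  ultimately show ?case
    using y(3,4) set_trap_step[of "snd y" a] by (auto simp: En_trap_mdp trans_pmf_trap_mdp)
qed

lemma agent_hist_enabled:
  assumes "auto_strat (trap_mdp N) \<tau>" "i \<le> N + 3" "x \<in> set_pmf (agent_hist (trap_mdp N) i \<tau> n)"
    "a \<in> set_pmf (\<tau> (fst x) (snd x))"
  shows "trap_enabled (snd x) a" "trans_pmf (trap_mdp N) (snd x) a = trap_step N (snd x) a"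
proof -
  have "snd x \<le> N + 3" using agent_hist_state_le[OF assms(1-3)] .
  moreover from this have "a \<in> En (trap_mdp N) (snd x)"
    using assms(1,4) unfolding auto_strat_def mdp_S_trap_mdp by auto
  ultimately show "trap_enabled (snd x) a"
    and "trans_pmf (trap_mdp N) (snd x) a = trap_step N (snd x) a"
    by (auto simp: En_trap_mdp trans_pmf_trap_mdp)
qed

lemma agent_hist_action_eq_0:
  assumes "auto_strat (trap_mdp N) \<tau>" "i \<le> N + 3" "x \<in> set_pmf (agent_hist (trap_mdp N) i \<tau> n)"
    "snd x \<noteq> 1"
  shows "\<tau> (fst x) (snd x) = return_pmf 0"
  using agent_hist_enabled(1)[OF assms(1-3)] assms(4)
  by (auto simp: trap_enabled_def simp flip: set_pmf_subset_singleton)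

lemma agent_hist_trap_SucE:
  assumes "auto_strat (trap_mdp N) \<tau>" "i \<le> N + 3"
    "x' \<in> set_pmf (agent_hist (trap_mdp N) i \<tau> (Suc n))"
  obtains x a t where "x \<in> set_pmf (agent_hist (trap_mdp N) i \<tau> n)"
    "a \<in> set_pmf (\<tau> (fst x) (snd x))" "trap_enabled (snd x) a"
    "t \<in> set_pmf (trap_step N (snd x) a)" "x' = (fst x @ [(snd x, a)], t)"
proof -
  from assms(3) obtain x a t where x: "x \<in> set_pmf (agent_hist (trap_mdp N) i \<tau> n)"
    "a \<in> set_pmf (\<tau> (fst x) (snd x))" "t \<in> set_pmf (trans_pmf (trap_mdp N) (snd x) a)"
    "x' = (fst x @ [(snd x, a)], t)"
    by (rule agent_hist_SucE)
  with agent_hist_enabled[OF assms(1,2) x(1,2)] that show thesis by simp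
qed

lemma agent_hist_goal_absorbing:
  assumes "auto_strat (trap_mdp N) \<tau>" "i \<le> N + 3" "x \<in> set_pmf (agent_hist (trap_mdp N) i \<tau> n)"
    "3 \<in> set (map fst (fst x))"
  shows "snd x = 3"
  using assms(3,4)
proof (induction n arbitrary: x)
  case 0
  then show ?case by simp
next
  case (Suc n)
  from agent_hist_trap_SucE[OF assms(1,2) Suc.prems(1)] obtain y a t
    where y: "y \<in> set_pmf (agent_hist (trap_mdp N) i \<tau> n)" "t \<in> set_pmf (trap_step N (snd y) a)"
      "x = (fst y @ [(snd y, a)], t)" .
  have "snd y = 3" using Suc y by (cases "3 \<in> set (map fst (fst y))") auto
  then show ?case using y(2,3) by (simp add: trap_step_def)
qed

lemma avoids_goal_iff:
  assumes "auto_strat (trap_mdp N) \<tau>" "i \<le> N + 3" "x \<in> set_pmf (agent_hist (trap_mdp N) i \<tau> n)"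
  shows "avoids {3} x \<longleftrightarrow> snd x \<noteq> 3"
  using agent_hist_goal_absorbing[OF assms] unfolding avoids_def by auto

lemma prob_trapped_Suc:
  assumes "auto_strat (trap_mdp N) \<tau>" "i \<le> N + 3"
  shows "measure (agent_hist (trap_mdp N) i \<tau> n) {x. snd x = 2}
    \<le> measure (agent_hist (trap_mdp N) i \<tau> (Suc n)) {x. snd x = 2}"
proof -
  let ?H = "agent_hist (trap_mdp N) i \<tau>" and ?A = "{x. snd x = 2}"
  have "emeasure (?H n) ?A = (\<integral>\<^sup>+x. indicator ?A x \<partial>?H n)"
    by simp
  also have "\<dots> \<le> (\<integral>\<^sup>+x. emeasure (agent_step (trap_mdp N) \<tau> x) ?A \<partial>?H n)"
  proof (rule nn_integral_mono_AE, unfold AE_measure_pmf_iff, intro ballI)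
    fix x assume x: "x \<in> set_pmf (?H n)"
    show "indicator ?A x \<le> emeasure (agent_step (trap_mdp N) \<tau> x) ?A"
    proof (cases "snd x = 2")
      case True
      have "trans_pmf (trap_mdp N) 2 0 = return_pmf 2"
        using N_ge_2 by (simp add: trans_pmf_trap_mdp trap_enabled_def trap_step_def)
      with True have "agent_step (trap_mdp N) \<tau> x = return_pmf (fst x @ [(2, 0)], 2)"
        using agent_hist_action_eq_0[OF assms x] by (simp add: agent_step_def bind_return_pmf)
      then show ?thesis using True by simp
    qed simp
  qed
  also have "\<dots> = emeasure (?H (Suc n)) ?A"
    by simp
  finally show ?thesis by (simp add: measure_pmf.emeasure_eq_measure)
qed

text \<open>Once trapped, an agent has avoided the goal and stays trapped.\<close>
lemma prob_trapped_le_prob_avoids: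
  assumes "auto_strat (trap_mdp N) \<tau>" "i \<le> N + 3" "m \<le> n"
  shows "measure (agent_hist (trap_mdp N) i \<tau> m) {x. snd x = 2}
    \<le> measure (agent_hist (trap_mdp N) i \<tau> n) {x. avoids {3} x}"
proof -
  have "measure (agent_hist (trap_mdp N) i \<tau> m) {x. snd x = 2}
      \<le> measure (agent_hist (trap_mdp N) i \<tau> n) {x. snd x = 2}"
    using prob_trapped_Suc[OF assms(1,2)] assms(3) by (rule lift_Suc_mono_le)
  also have "\<dots> \<le> measure (agent_hist (trap_mdp N) i \<tau> n) {x. avoids {3} x}"
    by (rule measure_pmf.finite_measure_mono_AE)
      (auto simp: AE_measure_pmf_iff avoids_goal_iff[OF assms(1,2)])
  finally show ?thesis .
qed

lemma prob_trapped_first_step: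
  assumes "auto_strat (trap_mdp N) \<tau>"
  shows "measure (agent_hist (trap_mdp N) 0 \<tau> 1) {x. snd x = 2} = 1 / real N"
proof -
  have "\<tau> [] 0 = return_pmf 0"
    using agent_hist_action_eq_0[OF assms, of 0 "([], 0)" 0] by simp
  moreover have "trans_pmf (trap_mdp N) 0 0 = trap_step N 0 0"
    by (simp add: trans_pmf_trap_mdp trap_enabled_def)
  ultimately have "agent_hist (trap_mdp N) 0 \<tau> 1 = map_pmf (\<lambda>t. ([(0, 0)], t)) (trap_step N 0 0)"
    by (simp add: agent_step_def bind_return_pmf)
  moreover have "{b. b} = {True}" by auto
  ultimately have "measure (agent_hist (trap_mdp N) 0 \<tau> 1) {x. snd x = 2}
      = measure (bernoulli_pmf (1 / real N)) {True}"
    by (simp add: trap_step_def vimage_def)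
  also have "\<dots> = 1 / real N"
    using N_ge_2 by (simp add: measure_pmf_single)
  finally show ?thesis .
qed

lemma agent_hist_from_0_not_1:
  assumes "auto_strat (trap_mdp N) \<tau>" "x \<in> set_pmf (agent_hist (trap_mdp N) 0 \<tau> n)"
  shows "snd x \<noteq> 1"
  using assms(2)
proof (induction n arbitrary: x)
  case 0
  then show ?case by simp
next
  case (Suc n)
  from agent_hist_trap_SucE[OF assms(1) zero_le Suc.prems] obtain y a t
    where y: "y \<in> set_pmf (agent_hist (trap_mdp N) 0 \<tau> n)" "t \<in> set_pmf (trap_step N (snd y) a)"
      "x = (fst y @ [(snd y, a)], t)" .
  with Suc.IH[OF y(1)] set_trap_step_cases[OF y(2)] show ?case by auto
qed

text \<open>Without gambling the goal is only reachable by the road, which takes N + 1 steps.\<close>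
lemma agent_hist_cautious_invariant:
  assumes "auto_strat (trap_mdp N) \<tau>" "i \<le> 2"
    and no_gamble: "\<And>m x. x \<in> set_pmf (agent_hist (trap_mdp N) i \<tau> m) \<Longrightarrow> snd x = 1 \<Longrightarrow>
      2 \<notin> set_pmf (\<tau> (fst x) 1)"
    and "x \<in> set_pmf (agent_hist (trap_mdp N) i \<tau> n)"
  shows "snd x \<le> 2 \<or> (4 \<le> snd x \<and> snd x \<le> n + 3) \<or> (snd x = 3 \<and> N < n)"
  using assms(4)
proof (induction n arbitrary: x)
  case 0
  then show ?case using assms(2) by simp
next
  case (Suc n)
  have "i \<le> N + 3" using assms(2) by simp
  from agent_hist_trap_SucE[OF assms(1) this Suc.prems] obtain y a t
    where y: "y \<in> set_pmf (agent_hist (trap_mdp N) i \<tau> n)" "a \<in> set_pmf (\<tau> (fst y) (snd y))"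
      "trap_enabled (snd y) a" "t \<in> set_pmf (trap_step N (snd y) a)"
      "x = (fst y @ [(snd y, a)], t)" .
  have "snd y = 1 \<longrightarrow> a \<le> 1"
  proof
    assume y1: "snd y = 1"
    with y(2) have "a \<in> set_pmf (\<tau> (fst y) 1)" by simp
    with no_gamble[OF y(1) y1] y(3) y1 show "a \<le> 1" by (auto simp: trap_enabled_def)
  qed
  with Suc.IH[OF y(1)] set_trap_step_cases[OF y(4)] show ?case unfolding y(5) snd_conv by auto
qed

lemma prob_avoids_goal_cautious:
  assumes "auto_strat (trap_mdp N) \<tau>" "i \<le> 2"
    and no_gamble: "\<And>m x. x \<in> set_pmf (agent_hist (trap_mdp N) i \<tau> m) \<Longrightarrow> snd x = 1 \<Longrightarrow>
      2 \<notin> set_pmf (\<tau> (fst x) 1)"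
    and "n \<le> N"
  shows "measure (agent_hist (trap_mdp N) i \<tau> n) {x. avoids {3} x} = 1"
proof -
  have "i \<le> N + 3" using assms(2) by simp
  moreover have "snd x \<noteq> 3" if "x \<in> set_pmf (agent_hist (trap_mdp N) i \<tau> n)" for x
    using agent_hist_cautious_invariant[OF assms(1-3) that] assms(4) by auto
  ultimately show ?thesis
    by (subst measure_pmf.prob_eq_1) (auto simp: AE_measure_pmf_iff avoids_goal_iff[OF assms(1)])
qed

lemma exp_MHit_profile_eq_top:
  assumes "auto_strat (trap_mdp N) \<tau>1" "auto_strat (trap_mdp N) \<tau>2"
    and gamble: "0 < measure (agent_hist (trap_mdp N) 1 \<tau>2 m) {x. snd x = 2}"
  shows "exp_MHit (trap_mdp N) 0 {3} 1 {3} (profile \<tau>1 \<tau>2) = \<top>"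
proof -
  let ?c = "measure (agent_hist (trap_mdp N) 1 \<tau>2 m) {x. snd x = 2}"
  have "?c / real N \<le> measure (hist (trap_mdp N) 0 1 (profile \<tau>1 \<tau>2) n) {x. not_hit {3} {3} x}"
    if "Suc m \<le> n" for n
  proof -
    have "1 / real N \<le> measure (agent_hist (trap_mdp N) 0 \<tau>1 n) {x. avoids {3} x}"
      using prob_trapped_le_prob_avoids[OF assms(1), of 0 1 n] prob_trapped_first_step[OF assms(1)]
        that by simp
    moreover have "?c \<le> measure (agent_hist (trap_mdp N) 1 \<tau>2 n) {x. avoids {3} x}"
      using prob_trapped_le_prob_avoids[OF assms(2), of 1 m n] that by simp
    ultimately show ?thesis
      using gamble by (simp add: prob_not_hit_profile divide_inverse mult.commute mult_mono)
  qed
  then show ?thesis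
    unfolding exp_MHit_def using gamble N_ge_2
    by (intro suminf_ennreal_eq_top[of "?c / real N" "Suc m"]) auto
qed

lemma exp_MHit_profile_ge_cautious:
  assumes "auto_strat (trap_mdp N) \<tau>1" "auto_strat (trap_mdp N) \<tau>2"
    and no_gamble: "\<And>m. measure (agent_hist (trap_mdp N) 1 \<tau>2 m) {x. snd x = 2} = 0"
  shows "ennreal (real N + 1) \<le> exp_MHit (trap_mdp N) 0 {3} 1 {3} (profile \<tau>1 \<tau>2)"
proof -
  have no_gamble2: "2 \<notin> set_pmf (\<tau>2 (fst x) 1)"
    if x: "x \<in> set_pmf (agent_hist (trap_mdp N) 1 \<tau>2 m)" "snd x = 1" for m x
  proof
    assume "2 \<in> set_pmf (\<tau>2 (fst x) 1)"
    moreover have "2 \<in> set_pmf (trans_pmf (trap_mdp N) 1 2)"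
      using N_ge_2 by (simp add: trans_pmf_trap_mdp trap_enabled_def trap_step_def)
    ultimately have "(fst x @ [(1, 2)], 2) \<in> set_pmf (agent_hist (trap_mdp N) 1 \<tau>2 (Suc m))"
      using agent_hist_SucI[OF x(1)] x(2) by simp
    then have "0 < measure (agent_hist (trap_mdp N) 1 \<tau>2 (Suc m)) {x. snd x = 2}"
      by (intro measure_pmf_posI) auto
    with no_gamble[of "Suc m"] show False by (simp del: agent_hist.simps)
  qed
  have no_gamble1: "2 \<notin> set_pmf (\<tau>1 (fst x) 1)"
    if "x \<in> set_pmf (agent_hist (trap_mdp N) 0 \<tau>1 m)" "snd x = 1" for m x
    using agent_hist_from_0_not_1[OF assms(1) that(1)] that(2) by simp
  have "measure (hist (trap_mdp N) 0 1 (profile \<tau>1 \<tau>2) n) {x. not_hit {3} {3} x} = 1"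
    if "n \<le> N" for n
    using prob_avoids_goal_cautious[OF assms(1) _ no_gamble1 that]
      prob_avoids_goal_cautious[OF assms(2) _ no_gamble2 that]
    by (simp add: prob_not_hit_profile)
  then have "ennreal (real N + 1) =
      (\<Sum>n<Suc N.
        ennreal (measure (hist (trap_mdp N) 0 1 (profile \<tau>1 \<tau>2) n) {x. not_hit {3} {3} x}))"
    by (simp add: ennreal_of_nat_eq_real_of_nat)
  also have "\<dots> \<le> exp_MHit (trap_mdp N) 0 {3} 1 {3} (profile \<tau>1 \<tau>2)"
    unfolding exp_MHit_def by (rule sum_le_suminf) auto
  finally show ?thesis .
qed

lemma exp_MHit_profile_ge:
  assumes "auto_strat (trap_mdp N) \<tau>1" "auto_strat (trap_mdp N) \<tau>2"
  shows "ennreal (real N + 1) \<le> exp_MHit (trap_mdp N) 0 {3} 1 {3} (profile \<tau>1 \<tau>2)"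
proof (cases "\<exists>m. 0 < measure (agent_hist (trap_mdp N) 1 \<tau>2 m) {x. snd x = 2}")
  case True
  then show ?thesis using exp_MHit_profile_eq_top[OF assms] by auto
next
  case False
  then show ?thesis
    by (intro exp_MHit_profile_ge_cautious[OF assms] antisym measure_nonneg) (auto simp: not_less)
qed

lemma opt_auto_trap_mdp_ge: "ennreal (real N + 1) \<le> opt_auto (trap_mdp N) 0 {3} 1 {3}"
  unfolding opt_auto_def
proof (rule INF_greatest)
  fix p assume "p \<in> {(\<tau>1, \<tau>2). auto_strat (trap_mdp N) \<tau>1 \<and> auto_strat (trap_mdp N) \<tau>2}"
  then show "ennreal (real N + 1) \<le> exp_MHit (trap_mdp N) 0 {3} 1 {3} (profile (fst p) (snd p))"
    by (intro exp_MHit_profile_ge) auto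
qed

subsection \<open>Upper bound for coordinated strategies\<close>

text \<open>Agent 2 waits one step to see where agent 1 went: it gambles if agent 1 is on the road,
  and takes the road itself if agent 1 is trapped.\<close>
definition informed_choice :: "nat \<times> nat \<Rightarrow> nat" where
  "informed_choice s =
     (if snd s = 1 then (if fst s = 0 then 0 else if fst s = 2 then 1 else 2) else 0)"

definition informed_strat :: cstrat where
  "informed_strat h s = return_pmf (0, informed_choice s)"

definition informed_reachable :: "nat \<Rightarrow> nat \<times> nat \<Rightarrow> bool" where
  "informed_reachable n s \<longleftrightarrow> (n = 0 \<and> s = (0, 1)) \<or> (n = 1 \<and> (s = (2, 1) \<or> s = (4, 1)))
     \<or> (2 \<le> n \<and> ((fst s = 2 \<and> snd s = (if n \<le> N + 1 then n + 2 else 3))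
          \<or> (fst s = (if n \<le> N then n + 3 else 3) \<and> (snd s = 3 \<or> snd s = 2))))"

lemma informed_enabled: "trap_enabled (fst s) 0" "trap_enabled (snd s) (informed_choice s)"
  by (auto simp: trap_enabled_def informed_choice_def)

lemma coord_strat_informed_strat: "coord_strat (trap_mdp N) informed_strat"
  unfolding coord_strat_def informed_strat_def
  by (auto simp: mdp_S_trap_mdp En_trap_mdp trap_enabled_def informed_choice_def)

lemma informed_reachable_state_le: "informed_reachable n s \<Longrightarrow> fst s \<le> N + 3 \<and> snd s \<le> N + 3"
  using N_ge_2 unfolding informed_reachable_def by auto

lemma informed_reachable_not_hit:
  "informed_reachable n s \<Longrightarrow> 2 \<le> n \<Longrightarrow> fst s \<noteq> 3 \<Longrightarrow> snd s \<noteq> 3 \<Longrightarrow>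
    n < N + 2 \<and> (fst s = 2 \<or> snd s = 2)"
  unfolding informed_reachable_def by (auto split: if_splits)

lemma hist_informed_SucE:
  assumes "x' \<in> set_pmf (hist (trap_mdp N) 0 1 informed_strat (Suc n))"
    and reach: "\<And>x. x \<in> set_pmf (hist (trap_mdp N) 0 1 informed_strat n) \<Longrightarrow>
      informed_reachable n (snd x)"
  obtains x t1 t2 where "x \<in> set_pmf (hist (trap_mdp N) 0 1 informed_strat n)"
    "t1 \<in> set_pmf (trap_step N (fst (snd x)) 0)"
    "t2 \<in> set_pmf (trap_step N (snd (snd x)) (informed_choice (snd x)))" "snd x' = (t1, t2)"
proof -
  from assms(1) obtain x a t1 t2 where x: "x \<in> set_pmf (hist (trap_mdp N) 0 1 informed_strat n)"
    "a \<in> set_pmf (informed_strat (fst x) (snd x))"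
    "t1 \<in> set_pmf (trans_pmf (trap_mdp N) (fst (snd x)) (fst a))"
    "t2 \<in> set_pmf (trans_pmf (trap_mdp N) (snd (snd x)) (snd a))"
    "x' = (fst x @ [(snd x, a)], (t1, t2))"
    by (rule hist_SucE)
  have "fst (snd x) \<le> N + 3" "snd (snd x) \<le> N + 3"
    using informed_reachable_state_le[OF reach[OF x(1)]] by auto
  with x informed_enabled[of "snd x"] that show thesis
    by (simp add: informed_strat_def trans_pmf_trap_mdp)
qed

lemma hist_informed_reachable:
  "x \<in> set_pmf (hist (trap_mdp N) 0 1 informed_strat n) \<Longrightarrow> informed_reachable n (snd x)"
proof (induction n arbitrary: x)
  case 0
  then show ?case by (simp add: informed_reachable_def)
next
  case (Suc n)
  from hist_informed_SucE[OF Suc.prems Suc.IH] obtain y t1 t2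
    where y: "y \<in> set_pmf (hist (trap_mdp N) 0 1 informed_strat n)"
      "t1 \<in> set_pmf (trap_step N (fst (snd y)) 0)"
      "t2 \<in> set_pmf (trap_step N (snd (snd y)) (informed_choice (snd y)))" "snd x = (t1, t2)" .
  obtain s1 s2 where s: "snd y = (s1, s2)" by fastforce
  show ?case
    using Suc.IH[OF y(1)] set_trap_step_cases[OF y(2)] set_trap_step_cases[OF y(3)] y(4) N_ge_2
    unfolding s informed_reachable_def informed_choice_def by (auto split: if_splits)
qed

text \<open>An upper bound on the probability of ending up in the trap, whatever enabled actions
  are taken.\<close>
definition trap_potential :: "nat \<Rightarrow> ennreal" where
  "trap_potential s = (if s = 2 then 1 else if s \<le> 1 then ennreal (1 / real N) else 0)"

lemma nn_integral_trap_potential_step: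
  assumes "trap_enabled s a"
  shows "(\<integral>\<^sup>+t. trap_potential t \<partial>trap_step N s a) \<le> trap_potential s"
proof -
  have bernoulli: "(\<integral>\<^sup>+b. f b \<partial>bernoulli_pmf (1 / real N)) =
      f True * ennreal (1 / real N) + f False * ennreal (1 - 1 / real N)" for f :: "bool \<Rightarrow> ennreal"
    using N_ge_2 by (subst nn_integral_measure_pmf_finite) (auto simp: UNIV_bool)
  consider "s = 0" | "s = 1" "a = 0" | "s = 1" "a = 1" | "s = 1" "a = 2"
    | "s = 2" | "s = 3" | "4 \<le> s"
    using assms unfolding trap_enabled_def by linarith
  then show ?thesis
    by cases (simp_all add: trap_step_def trap_potential_def bernoulli)
qed

lemma prob_trapped_informed:
  "measure (hist (trap_mdp N) 0 1 informed_strat n) {x. fst (snd x) = 2 \<or> snd (snd x) = 2}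
    \<le> 2 / real N"
proof -
  let ?H = "hist (trap_mdp N) 0 1 informed_strat n"
  let ?V = "\<lambda>s. trap_potential (fst s) + trap_potential (snd s)"
  let ?A = "{x. fst (snd x) = 2 \<or> snd (snd x) = 2}"
  have "emeasure ?H ?A = (\<integral>\<^sup>+x. indicator ?A x \<partial>?H)"
    by simp
  also have "\<dots> \<le> (\<integral>\<^sup>+x. ?V (snd x) \<partial>?H)"
    by (rule nn_integral_mono) (auto simp: trap_potential_def split: split_indicator)
  also have "\<dots> \<le> ?V (0, 1)"
  proof (rule nn_integral_hist_le)
    fix m x a
    assume x: "x \<in> set_pmf (hist (trap_mdp N) 0 1 informed_strat m)"
      and a: "a \<in> set_pmf (informed_strat (fst x) (snd x))"
    have "fst (snd x) \<le> N + 3" "snd (snd x) \<le> N + 3"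
      using informed_reachable_state_le[OF hist_informed_reachable[OF x]] by auto
    with a show "(\<integral>\<^sup>+t. ?V t \<partial>pair_pmf (trans_pmf (trap_mdp N) (fst (snd x)) (fst a))
        (trans_pmf (trap_mdp N) (snd (snd x)) (snd a))) \<le> ?V (snd x)"
      by (simp add: informed_strat_def trans_pmf_trap_mdp informed_enabled nn_integral_pair_pmf_add
          add_mono nn_integral_trap_potential_step)
  qed
  also have "\<dots> = ennreal (2 / real N)"
    by (simp add: trap_potential_def ennreal_plus[symmetric] del: ennreal_plus)
  finally show ?thesis by (simp add: measure_pmf.emeasure_eq_measure)
qed

lemma prob_not_hit_informed_le:
  "measure (hist (trap_mdp N) 0 1 informed_strat n) {x. not_hit {3} {3} x}
    \<le> (if n < 2 then 1 else if n < N + 2 then 2 / real N else 0)"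
proof (cases "n < 2")
  case False
  let ?H = "hist (trap_mdp N) 0 1 informed_strat n"
  have "measure ?H {x. not_hit {3} {3} x}
      \<le> measure ?H {x. n < N + 2 \<and> (fst (snd x) = 2 \<or> snd (snd x) = 2)}"
    using False informed_reachable_not_hit[OF hist_informed_reachable]
    by (intro measure_pmf.finite_measure_mono_AE) (auto simp: AE_measure_pmf_iff not_hit_def)
  then show ?thesis
    using prob_trapped_informed[of n] False by (auto split: if_splits)
qed simp

lemma exp_MHit_informed_le: "exp_MHit (trap_mdp N) 0 {3} 1 {3} informed_strat \<le> 4"
proof -
  define g where "g n = (if n < 2 then 1 else if n < N + 2 then 2 / real N else 0)" for n
  have "exp_MHit (trap_mdp N) 0 {3} 1 {3} informed_strat \<le> (\<Sum>n. ennreal (g n))"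
    unfolding exp_MHit_def g_def by (intro suminf_le summableI ennreal_leI prob_not_hit_informed_le)
  also have "\<dots> = (\<Sum>n<N+2. ennreal (g n))"
    by (rule suminf_finite) (auto simp: g_def)
  also have "\<dots> = ennreal (\<Sum>n<N+2. g n)"
    by (rule sum_ennreal) (simp add: g_def)
  also have "(\<Sum>n<N+2. g n) = (\<Sum>n<2. g n) + (\<Sum>n\<in>{2..<N+2}. g n)"
    unfolding lessThan_atLeast0 by (rule sum.atLeastLessThan_concat[symmetric]) simp_all
  also have "\<dots> = 4"
    using N_ge_2 by (simp add: g_def numeral_2_eq_2)
  finally show ?thesis by simp
qed

lemma opt_coord_trap_mdp_le: "opt_coord (trap_mdp N) 0 {3} 1 {3} \<le> 4"
  unfolding opt_coord_def
  using coord_strat_informed_strat exp_MHit_informed_le by (blast intro: INF_lower2)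

end

theorem mainTheorem7:
  fixes B :: nat
  shows "\<exists>M i1 T1 i2 T2. mssp2 M i1 T1 i2 T2 \<and>
           opt_coord M i1 T1 i2 T2 < \<top> \<and>
           of_nat B \<le> price_of_autonomy M i1 T1 i2 T2"
proof -
  define N where "N = 4 * B + 2"
  have "2 \<le> N" by (simp add: N_def)
  note mssp = mssp2_trap_mdp[OF this] and coord = opt_coord_trap_mdp_le[OF this]
    and autonomous = opt_auto_trap_mdp_ge[OF this]
  have "opt_coord (trap_mdp N) 0 {3} 1 {3} < \<top>"
    using coord by (simp add: order_le_less_trans)
  moreover have "of_nat B \<le> price_of_autonomy (trap_mdp N) 0 {3} 1 {3}"
    unfolding price_of_autonomy_def
  proof (rule of_nat_le_divide_ennreal[where c = 4])
    show "ennreal (real B * 4) \<le> opt_auto (trap_mdp N) 0 {3} 1 {3}"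
      using autonomous by (rule order_trans[rotated]) (intro ennreal_leI, simp add: N_def)
    show "0 < opt_auto (trap_mdp N) 0 {3} 1 {3}"
      using autonomous by (rule order_less_le_trans[rotated]) (simp add: add_nonneg_pos)
  qed (use coord in simp)
  ultimately show ?thesis using mssp by blast
qed

end
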